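(* For any simple undirected graph $G$ with $n$ vertices and $m$ edges, $$n_G(\mathcal{L}_4)=\sum_{\{st,uv\}\in Q}(a_{su}+a_{sv}+a_{tu}+a_{tv})=\frac12\sum_{s=1}^n\sum_{t\ne s}\big(a^{(3)}_{st}-a_{st}(2k_t-1)\big)=m_3+m_1-n\langle k^2\rangle .$$
   Context: $A=(a_{ij})$ is the adjacency matrix, $A^p=(a^{(p)}_{ij})$ its $p$-th power, $m_p=\sum_{s<t}a^{(p)}_{st}$ (so $m_1=m$), $k_s$ the degree of $s$, $\langle k^2\rangle=\frac1n\sum_s k_s^2$. $Q$ is the set of unordered pairs $\{st,uv\}$ of edges $st,uv\in E$ with $s,t,u,v$ pairwise distinct. $n_G(F)$ is the number of (not necessarily induced) subgraphs of $G$ isomorphic to $F$; $\mathcal{L}_4$ is the path on 4 vertices. *)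

theory Defs
  imports Main Complex_Main
begin

definition simple_graph :: "'a set \<Rightarrow> ('a \<Rightarrow> 'a \<Rightarrow> bool) \<Rightarrow> bool" where
  "simple_graph V E \<longleftrightarrow> finite V \<and> (\<forall>s t. E s t \<longrightarrow> E t s) \<and> (\<forall>s. \<not> E s s)
     \<and> (\<forall>s t. E s t \<longrightarrow> s \<in> V \<and> t \<in> V)"

definition edges :: "('a \<Rightarrow> 'a \<Rightarrow> bool) \<Rightarrow> 'a set set" where
  "edges E = {{s, t} | s t. E s t}"

definition adj :: "('a \<Rightarrow> 'a \<Rightarrow> bool) \<Rightarrow> 'a \<Rightarrow> 'a \<Rightarrow> real" where
  "adj E s t = (if E s t then 1 else 0)"

fun adjpow :: "'a set \<Rightarrow> ('a \<Rightarrow> 'a \<Rightarrow> bool) \<Rightarrow> nat \<Rightarrow> 'a \<Rightarrow> 'a \<Rightarrow> real" where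
  "adjpow V E 0 s t = (if s = t then 1 else 0)"
| "adjpow V E (Suc p) s t = (\<Sum>w\<in>V. adjpow V E p s w * adj E w t)"

definition mp :: "'a::linorder set \<Rightarrow> ('a \<Rightarrow> 'a \<Rightarrow> bool) \<Rightarrow> nat \<Rightarrow> real" where
  "mp V E p = (\<Sum>(s, t)\<in>{(s, t). s \<in> V \<and> t \<in> V \<and> s < t}. adjpow V E p s t)"

definition degree :: "'a set \<Rightarrow> ('a \<Rightarrow> 'a \<Rightarrow> bool) \<Rightarrow> 'a \<Rightarrow> nat" where
  "degree V E s = card {t \<in> V. E s t}"

definition mean_sq_degree :: "'a set \<Rightarrow> ('a \<Rightarrow> 'a \<Rightarrow> bool) \<Rightarrow> real" where
  "mean_sq_degree V E = (1 / real (card V)) * (\<Sum>s\<in>V. (real (degree V E s))^2)"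

definition Qpairs :: "('a \<Rightarrow> 'a \<Rightarrow> bool) \<Rightarrow> 'a set set set" where
  "Qpairs E = {{{s, t}, {u, v}} | s t u v. E s t \<and> E u v \<and>
                 s \<noteq> u \<and> s \<noteq> v \<and> t \<noteq> u \<and> t \<noteq> v}"

text \<open>The summand a_su + a_sv + a_tu + a_tv attached to {st,uv} in Q
  (independent of the labelling since E is symmetric).\<close>
definition cross :: "('a \<Rightarrow> 'a \<Rightarrow> bool) \<Rightarrow> 'a set set \<Rightarrow> real" where
  "cross E q = (SOME c. \<exists>s t u v. q = {{s, t}, {u, v}} \<and> E s t \<and> E u v \<and>
       s \<noteq> u \<and> s \<noteq> v \<and> t \<noteq> u \<and> t \<noteq> v \<and>
       c = adj E s u + adj E s v + adj E t u + adj E t v)"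

definition P4_subgraphs :: "'a set \<Rightarrow> ('a \<Rightarrow> 'a \<Rightarrow> bool) \<Rightarrow> ('a set \<times> 'a set set) set" where
  "P4_subgraphs V E = {(W, F). W \<subseteq> V \<and> F \<subseteq> edges E \<and>
      (\<exists>f. bij_betw f {0..<4::nat} W \<and> F = {{f i, f (Suc i)} | i. i < 3})}"

definition count_P4 :: "'a set \<Rightarrow> ('a \<Rightarrow> 'a \<Rightarrow> bool) \<Rightarrow> nat" where
  "count_P4 V E = card (P4_subgraphs V E)"

end

(*
  Let P be the set of vertex sequences (a, b, c, d) with ab, bc, cd edges and a, b, c, d
  distinct. Every copy of L4 arises from exactly two elements of P (the two directions),
  so |P| = 2 n_G(L4).

  Orienting both edges of a pair in Q and ordering the pair covers each element of Q
  eight times.  Over these oriented pairs (s, t, u, v) the cross term a_tu is the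
  indicator of (s, t, u, v) in P, and swapping s, t and/or u, v turns the other three
  cross terms into it; hence the cross terms sum to 4 |P| / 8 over Q.

  The entry a^(3)_st counts walks s x y t; for s <> t such a walk is a path unless
  y = s or x = t, and inclusion-exclusion counts these as a_st (k_s + k_t - 1).  The
  antisymmetric part a_st (k_s - k_t) sums to zero, which turns the correction into
  a_st (2 k_t - 1) and makes the double sum equal to |P|.  Finally the symmetry of A^p
  gives sum_{s <> t} a^(p)_st = 2 m_p, and sum_t k_t (2 k_t - 1) = 2 n <k^2> - 2 m_1.
*)
theory Submission
  imports Defs
begin

lemma sum_fibres_const:
  fixes g :: "'a \<Rightarrow> 'c::comm_semiring_1"
  assumes "finite A"
    and fibre: "\<And>x. x \<in> A \<Longrightarrow> card {y \<in> A. f y = f x} = c"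
    and g: "\<And>x. x \<in> A \<Longrightarrow> g x = h (f x)"
  shows "sum g A = of_nat c * sum h (f ` A)"
proof -
  have "sum g A = (\<Sum>b\<in>f ` A. \<Sum>x\<in>{x \<in> A. f x = b}. g x)"
    using sum.group[OF assms(1) finite_imageI[OF assms(1)], where g = f and h = g] by simp
  also have "\<dots> = (\<Sum>b\<in>f ` A. of_nat c * h b)"
  proof (rule sum.cong[OF refl])
    fix b assume "b \<in> f ` A"
    then obtain x where x: "x \<in> A" "b = f x" by blast
    have "(\<Sum>y\<in>{y \<in> A. f y = b}. g y) = (\<Sum>y\<in>{y \<in> A. f y = b}. h b)"
      using g by simp
    then show "(\<Sum>y\<in>{y \<in> A. f y = b}. g y) = of_nat c * h b"
      using fibre[OF x(1)] x(2) by simp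
  qed
  finally show ?thesis by (simp add: sum_distrib_left)
qed

lemma sum_less_pairs_symmetric:
  fixes f :: "'a::linorder \<Rightarrow> 'a \<Rightarrow> 'b::comm_semiring_1"
  assumes "finite V" and sym: "\<And>s t. s \<in> V \<Longrightarrow> t \<in> V \<Longrightarrow> f s t = f t s"
  shows "2 * (\<Sum>(s, t)\<in>{(s, t). s \<in> V \<and> t \<in> V \<and> s < t}. f s t) = (\<Sum>s\<in>V. \<Sum>t\<in>V - {s}. f s t)"
proof -
  let ?U = "{(s, t). s \<in> V \<and> t \<in> V \<and> s < t}"
  have U: "finite ?U" using \<open>finite V\<close> by (auto intro: finite_subset[of _ "V \<times> V"])
  have split: "Sigma V (\<lambda>s. V - {s}) = ?U \<union> prod.swap ` ?U" by (auto simp: neq_iff)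
  have "(\<Sum>s\<in>V. \<Sum>t\<in>V - {s}. f s t) = (\<Sum>(s, t)\<in>Sigma V (\<lambda>s. V - {s}). f s t)"
    using \<open>finite V\<close> by (simp add: sum.Sigma)
  also have "\<dots> = (\<Sum>(s, t)\<in>?U. f s t) + (\<Sum>(s, t)\<in>prod.swap ` ?U. f s t)"
    unfolding split using U by (intro sum.union_disjoint) auto
  also have "(\<Sum>(s, t)\<in>prod.swap ` ?U. f s t) = (\<Sum>(s, t)\<in>?U. f s t)"
    by (auto simp: sum.reindex intro!: sum.cong sym)
  finally show ?thesis by (simp add: mult_2)
qed

lemma consecutive_pairs_below_3:
  "{{f i, f (Suc i)} | i. i < 3} = {{f 0, f 1}, {f 1, f 2}, {f 2, f (3::nat)}}"
proof -
  have "{{f i, f (Suc i)} | i. i < 3} = (\<lambda>i. {f i, f (Suc i)}) ` {0, 1, 2}"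
    by (auto simp: less_Suc_eq numeral_eq_Suc)
  then show ?thesis by (simp add: numeral_eq_Suc)
qed

lemma path_edges_eqD:
  assumes "distinct [a, b, c, d]" "distinct [a', b', c', d']"
    and eq: "{{a, b}, {b, c}, {c, d}} = {{a', b'}, {b', c'}, {c', d'}}"
  shows "(a', b', c', d') = (a, b, c, d) \<or> (a', b', c', d') = (d, c, b, a)"
proof -
  have inner: "x = b \<or> x = c" if "e1 \<in> {{a, b}, {b, c}, {c, d}}" "e2 \<in> {{a, b}, {b, c}, {c, d}}"
    "e1 \<noteq> e2" "x \<in> e1" "x \<in> e2" for e1 e2 x
    using that assms(1) by auto
  have "b' = b \<and> c' = c \<or> b' = c \<and> c' = b"
    using inner[of "{a', b'}" "{b', c'}" b'] inner[of "{b', c'}" "{c', d'}" c'] eq assms(2)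
    by (auto simp: doubleton_eq_iff)
  moreover have "{a', b'} \<in> {{a, b}, {b, c}, {c, d}}" "{c', d'} \<in> {{a, b}, {b, c}, {c, d}}"
    using eq by auto
  ultimately show ?thesis
    using assms(1,2) by (auto simp: doubleton_eq_iff)
qed

lemma edge_pair_eq_iff:
  assumes "distinct [s, t, u, v]"
  shows "{{s, t}, {u, v}} = {{s', t'}, {u', v'}} \<longleftrightarrow>
    (s', t', u', v') \<in> {(s, t, u, v), (t, s, u, v), (s, t, v, u), (t, s, v, u),
                         (u, v, s, t), (v, u, s, t), (u, v, t, s), (v, u, t, s)}"
proof
  assume eq: "{{s, t}, {u, v}} = {{s', t'}, {u', v'}}"
  have "{s', t'} \<noteq> {u', v'}"
    using eq assms by (auto simp: doubleton_eq_iff)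
  then have "{s', t'} = {s, t} \<and> {u', v'} = {u, v} \<or> {s', t'} = {u, v} \<and> {u', v'} = {s, t}"
    using eq by (auto simp: doubleton_eq_iff)
  then show "(s', t', u', v') \<in> {(s, t, u, v), (t, s, u, v), (s, t, v, u), (t, s, v, u),
                         (u, v, s, t), (v, u, s, t), (u, v, t, s), (v, u, t, s)}"
    by (auto simp: doubleton_eq_iff)
qed (auto simp: insert_commute)

definition P4_sequences :: "('a \<Rightarrow> 'a \<Rightarrow> bool) \<Rightarrow> ('a \<times> 'a \<times> 'a \<times> 'a) set" where
  "P4_sequences E = {(a, b, c, d). E a b \<and> E b c \<and> E c d \<and> a \<noteq> c \<and> a \<noteq> d \<and> b \<noteq> d}"

definition P4_of :: "'a \<times> 'a \<times> 'a \<times> 'a \<Rightarrow> 'a set \<times> 'a set set" where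
  "P4_of = (\<lambda>(a, b, c, d). ({a, b, c, d}, {{a, b}, {b, c}, {c, d}}))"

definition oriented_Qpairs :: "('a \<Rightarrow> 'a \<Rightarrow> bool) \<Rightarrow> ('a \<times> 'a \<times> 'a \<times> 'a) set" where
  "oriented_Qpairs E = {(s, t, u, v). E s t \<and> E u v \<and> s \<noteq> u \<and> s \<noteq> v \<and> t \<noteq> u \<and> t \<noteq> v}"

definition edge_pair_of :: "'a \<times> 'a \<times> 'a \<times> 'a \<Rightarrow> 'a set set" where
  "edge_pair_of = (\<lambda>(s, t, u, v). {{s, t}, {u, v}})"

locale sgraph =
  fixes V :: "'a set" and E :: "'a \<Rightarrow> 'a \<Rightarrow> bool"
  assumes simple_graph: "simple_graph V E"
begin

lemma finite_V: "finite V"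
  and sym: "E s t \<Longrightarrow> E t s"
  and irrefl: "\<not> E s s"
  and vertices: "E s t \<Longrightarrow> s \<in> V" "E s t \<Longrightarrow> t \<in> V"
  using simple_graph unfolding simple_graph_def by blast+

lemma sym_iff: "E s t \<longleftrightarrow> E t s"
  using sym by blast

lemma doubleton_in_edges_iff: "{s, t} \<in> edges E \<longleftrightarrow> E s t"
  unfolding edges_def by (auto simp: doubleton_eq_iff sym_iff)

lemma adj_sym: "adj E s t = adj E t s"
  unfolding adj_def by (simp add: sym_iff)

lemma adj_of_bool: "adj E s t = of_bool (E s t)"
  unfolding adj_def by simp

lemma adj_self: "adj E s s = 0"
  unfolding adj_def using irrefl by simp

lemma adj_outside: "s \<notin> V \<or> t \<notin> V \<Longrightarrow> adj E s t = 0"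
  unfolding adj_def using vertices by auto

lemma P4_sequences_distinct: "(a, b, c, d) \<in> P4_sequences E \<Longrightarrow> distinct [a, b, c, d]"
  unfolding P4_sequences_def using irrefl by auto

lemma P4_sequences_subset: "P4_sequences E \<subseteq> V \<times> V \<times> V \<times> V"
  unfolding P4_sequences_def using vertices by auto

lemma finite_P4_sequences: "finite (P4_sequences E)"
  using P4_sequences_subset finite_V by (auto intro: finite_subset)

lemma P4_of_P4_sequences: "P4_of ` P4_sequences E = P4_subgraphs V E"
proof
  show "P4_of ` P4_sequences E \<subseteq> P4_subgraphs V E"
  proof
    fix p assume "p \<in> P4_of ` P4_sequences E"
    then obtain a b c d where abcd: "(a, b, c, d) \<in> P4_sequences E" and p: "p = P4_of (a, b, c, d)"
      by auto
    define f where "f i = [a, b, c, d] ! i" for i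
    have f: "f 0 = a" "f 1 = b" "f 2 = c" "f 3 = d"
      by (simp_all add: f_def numeral_eq_Suc)
    have I: "{0..<4::nat} = {0, 1, 2, 3}" by auto
    have bij: "bij_betw f {0..<4} {a, b, c, d}"
      using P4_sequences_distinct[OF abcd] unfolding bij_betw_def I
      by (simp add: f f(2)[unfolded One_nat_def])
    have F: "{{a, b}, {b, c}, {c, d}} = {{f i, f (Suc i)} | i. i < 3}"
      unfolding consecutive_pairs_below_3 f by (rule refl)
    have sub: "{a, b, c, d} \<subseteq> V" "{{a, b}, {b, c}, {c, d}} \<subseteq> edges E"
      using abcd vertices by (auto simp: P4_sequences_def doubleton_in_edges_iff)
    show "p \<in> P4_subgraphs V E"
      unfolding p P4_of_def P4_subgraphs_def mem_Collect_eq prod.case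
      by (intro conjI exI[of _ f] sub bij F)
  qed
next
  show "P4_subgraphs V E \<subseteq> P4_of ` P4_sequences E"
  proof
    fix p assume "p \<in> P4_subgraphs V E"
    then obtain W F f where p: "p = (W, F)" and "F \<subseteq> edges E"
      and bij: "bij_betw f {0..<4::nat} W" and F: "F = {{f i, f (Suc i)} | i. i < 3}"
      unfolding P4_subgraphs_def by blast
    have I: "{0..<4::nat} = {0, 1, 2, 3}" by auto
    have F3: "F = {{f 0, f 1}, {f 1, f 2}, {f 2, f 3}}"
      unfolding F by (rule consecutive_pairs_below_3)
    have W: "W = {f 0, f 1, f 2, f 3}" and "inj_on f {0, 1, 2, 3}"
      using bij unfolding bij_betw_def I by auto
    then have "distinct [f 0, f 1, f 2, f 3]"
      by (auto dest: inj_onD)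
    moreover have "E (f 0) (f 1)" "E (f 1) (f 2)" "E (f 2) (f 3)"
      using \<open>F \<subseteq> edges E\<close> unfolding F3 by (auto simp: doubleton_in_edges_iff)
    ultimately have "(f 0, f 1, f 2, f 3) \<in> P4_sequences E"
      unfolding P4_sequences_def by auto
    moreover have "p = P4_of (f 0, f 1, f 2, f 3)"
      unfolding p P4_of_def W F3 by simp
    ultimately show "p \<in> P4_of ` P4_sequences E" by blast
  qed
qed

lemma card_P4_of_fibre:
  assumes "x \<in> P4_sequences E"
  shows "card {y \<in> P4_sequences E. P4_of y = P4_of x} = 2"
proof -
  obtain a b c d where x: "x = (a, b, c, d)" by (cases x)
  have dist: "distinct [a, b, c, d]"
    using P4_sequences_distinct assms x by blast
  have "{y \<in> P4_sequences E. P4_of y = P4_of x} = {(a, b, c, d), (d, c, b, a)}"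
  proof (intro equalityI subsetI)
    fix y assume y: "y \<in> {y \<in> P4_sequences E. P4_of y = P4_of x}"
    obtain a' b' c' d' where y': "y = (a', b', c', d')" by (cases y)
    have dist': "distinct [a', b', c', d']"
      using P4_sequences_distinct y y' by blast
    have "P4_of (a, b, c, d) = P4_of (a', b', c', d')"
      using y unfolding x y' by simp
    then have "{{a, b}, {b, c}, {c, d}} = {{a', b'}, {b', c'}, {c', d'}}"
      unfolding P4_of_def prod.case by (simp only: prod.inject)
    then show "y \<in> {(a, b, c, d), (d, c, b, a)}"
      using path_edges_eqD[OF dist dist'] y' by blast
  next
    have "(d, c, b, a) \<in> P4_sequences E"
      using assms unfolding x P4_sequences_def by (auto simp: sym_iff)
    moreover have "P4_of (d, c, b, a) = P4_of x"
      unfolding x P4_of_def by (auto simp: insert_commute)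
    ultimately show "y \<in> {y \<in> P4_sequences E. P4_of y = P4_of x}"
      if "y \<in> {(a, b, c, d), (d, c, b, a)}" for y
      using that assms x by blast
  qed
  then show ?thesis
    using dist by simp
qed

lemma card_P4_sequences_count_P4: "real (card (P4_sequences E)) = 2 * real (count_P4 V E)"
  using sum_fibres_const[OF finite_P4_sequences card_P4_of_fibre, of "\<lambda>_. 1" "\<lambda>_. 1"]
  unfolding count_P4_def P4_of_P4_sequences by simp

lemma oriented_Qpairs_distinct: "(s, t, u, v) \<in> oriented_Qpairs E \<Longrightarrow> distinct [s, t, u, v]"
  unfolding oriented_Qpairs_def using irrefl by auto

lemma oriented_Qpairs_subset: "oriented_Qpairs E \<subseteq> V \<times> V \<times> V \<times> V"
  unfolding oriented_Qpairs_def using vertices by auto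

lemma finite_oriented_Qpairs: "finite (oriented_Qpairs E)"
  using oriented_Qpairs_subset finite_V by (auto intro: finite_subset)

lemma edge_pair_of_oriented_Qpairs: "edge_pair_of ` oriented_Qpairs E = Qpairs E"
  unfolding edge_pair_of_def oriented_Qpairs_def Qpairs_def by auto

lemma card_edge_pair_of_fibre:
  assumes "x \<in> oriented_Qpairs E"
  shows "card {y \<in> oriented_Qpairs E. edge_pair_of y = edge_pair_of x} = 8"
proof -
  obtain s t u v where x: "x = (s, t, u, v)" by (cases x)
  have dist: "distinct [s, t, u, v]"
    using oriented_Qpairs_distinct assms x by blast
  let ?R = "{(s, t, u, v), (t, s, u, v), (s, t, v, u), (t, s, v, u),
             (u, v, s, t), (v, u, s, t), (u, v, t, s), (v, u, t, s)}"
  have "?R \<subseteq> oriented_Qpairs E"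
    using assms dist unfolding x oriented_Qpairs_def by (auto simp: sym_iff)
  moreover have "edge_pair_of x = edge_pair_of y \<longleftrightarrow> y \<in> ?R" for y
  proof -
    obtain s' t' u' v' where y: "y = (s', t', u', v')" by (cases y)
    show ?thesis
      unfolding x y edge_pair_of_def prod.case by (rule edge_pair_eq_iff[OF dist])
  qed
  ultimately have "{y \<in> oriented_Qpairs E. edge_pair_of y = edge_pair_of x} = ?R"
    by (auto simp flip: eq_commute[of "edge_pair_of x"])
  then show ?thesis
    using dist by simp
qed

lemma cross_edge_pair_of:
  assumes "(s, t, u, v) \<in> oriented_Qpairs E"
  shows "cross E {{s, t}, {u, v}} = adj E s u + adj E s v + adj E t u + adj E t v"
  unfolding cross_def
proof (rule some_equality, goal_cases witness unique)
  case witness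
  show ?case
    using assms unfolding oriented_Qpairs_def by blast
next
  case (unique c)
  then obtain s' t' u' v' where eq: "{{s, t}, {u, v}} = {{s', t'}, {u', v'}}"
    and c: "c = adj E s' u' + adj E s' v' + adj E t' u' + adj E t' v'"
    by blast
  show ?case
    using eq unfolding c edge_pair_eq_iff[OF oriented_Qpairs_distinct[OF assms]]
    by (auto simp: adj_sym)
qed

lemma sum_oriented_Qpairs_middle_adj:
  "(\<Sum>(s, t, u, v)\<in>oriented_Qpairs E. adj E t u) = real (card (P4_sequences E))"
proof -
  have "(\<Sum>(s, t, u, v)\<in>oriented_Qpairs E. adj E t u)
      = (\<Sum>x\<in>oriented_Qpairs E. of_bool (x \<in> P4_sequences E))"
    unfolding oriented_Qpairs_def P4_sequences_def adj_of_bool using irrefl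
    by (intro sum.cong) auto
  moreover have "oriented_Qpairs E \<inter> {x. x \<in> P4_sequences E} = P4_sequences E"
    unfolding oriented_Qpairs_def P4_sequences_def using irrefl by auto
  ultimately show ?thesis
    using finite_oriented_Qpairs by simp
qed

lemma sum_oriented_Qpairs_cross_terms:
  "(\<Sum>(s, t, u, v)\<in>oriented_Qpairs E. adj E s u + adj E s v + adj E t u + adj E t v)
     = 4 * real (card (P4_sequences E))"
proof -
  let ?Q = "oriented_Qpairs E"
  have swap_first: "(\<Sum>(s, t, u, v)\<in>?Q. adj E s u) = (\<Sum>(s, t, u, v)\<in>?Q. adj E t u)"
    by (rule sum.reindex_bij_witness[where i = "\<lambda>(s, t, u, v). (t, s, u, v)"
                                      and j = "\<lambda>(s, t, u, v). (t, s, u, v)"])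
      (auto simp: oriented_Qpairs_def intro: sym)
  have swap_second: "(\<Sum>(s, t, u, v)\<in>?Q. adj E t v) = (\<Sum>(s, t, u, v)\<in>?Q. adj E t u)"
    by (rule sum.reindex_bij_witness[where i = "\<lambda>(s, t, u, v). (s, t, v, u)"
                                      and j = "\<lambda>(s, t, u, v). (s, t, v, u)"])
      (auto simp: oriented_Qpairs_def intro: sym)
  have swap_both: "(\<Sum>(s, t, u, v)\<in>?Q. adj E s v) = (\<Sum>(s, t, u, v)\<in>?Q. adj E t u)"
    by (rule sum.reindex_bij_witness[where i = "\<lambda>(s, t, u, v). (t, s, v, u)"
                                      and j = "\<lambda>(s, t, u, v). (t, s, v, u)"])
      (auto simp: oriented_Qpairs_def intro: sym)
  show ?thesis
    using swap_first swap_second swap_both sum_oriented_Qpairs_middle_adj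
    by (simp add: sum.distrib case_prod_beta)
qed

lemma sum_Qpairs_cross: "2 * (\<Sum>q\<in>Qpairs E. cross E q) = real (card (P4_sequences E))"
proof -
  have "(\<Sum>(s, t, u, v)\<in>oriented_Qpairs E. adj E s u + adj E s v + adj E t u + adj E t v)
      = of_nat 8 * (\<Sum>q\<in>edge_pair_of ` oriented_Qpairs E. cross E q)"
    by (rule sum_fibres_const[OF finite_oriented_Qpairs card_edge_pair_of_fibre])
      (auto simp: edge_pair_of_def cross_edge_pair_of)
  then show ?thesis
    using sum_oriented_Qpairs_cross_terms unfolding edge_pair_of_oriented_Qpairs by simp
qed

abbreviation deg :: "'a \<Rightarrow> real" where
  "deg s \<equiv> real (degree V E s)"

lemma deg_eq_sum_adj: "deg s = (\<Sum>t\<in>V. adj E s t)"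
proof -
  have "V \<inter> {t. E s t} = {t \<in> V. E s t}" by blast
  then show ?thesis
    unfolding degree_def adj_of_bool using finite_V by simp
qed

lemma sum_adj_remove_self: "(\<Sum>t\<in>V - {s}. adj E s t * g t) = (\<Sum>t\<in>V. adj E s t * g t)"
  using finite_V by (simp add: sum_diff1 adj_self)

lemma sum_adj_left: "(\<Sum>s\<in>V. \<Sum>t\<in>V - {s}. adj E s t * f s) = (\<Sum>s\<in>V. deg s * f s)"
proof -
  have "(\<Sum>t\<in>V - {s}. adj E s t * f s) = deg s * f s" if "s \<in> V" for s
    unfolding sum_adj_remove_self by (simp add: deg_eq_sum_adj sum_distrib_right)
  then show ?thesis by simp
qed

lemma sum_adj_right: "(\<Sum>s\<in>V. \<Sum>t\<in>V - {s}. adj E s t * f t) = (\<Sum>t\<in>V. deg t * f t)"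
proof -
  have "(\<Sum>s\<in>V. \<Sum>t\<in>V - {s}. adj E s t * f t) = (\<Sum>s\<in>V. \<Sum>t\<in>V. adj E s t * f t)"
    by (simp add: sum_adj_remove_self)
  also have "\<dots> = (\<Sum>t\<in>V. \<Sum>s\<in>V. adj E t s * f t)"
    by (subst sum.swap) (simp add: adj_sym)
  finally show ?thesis
    by (simp add: deg_eq_sum_adj sum_distrib_right)
qed

lemma adjpow_1: "adjpow V E 1 s t = adj E s t"
  using finite_V adj_outside by (simp add: if_distrib[of "\<lambda>x. x * _"] sum.delta cong: if_cong)

lemma adjpow_Suc_left: "adjpow V E (Suc p) s t = (\<Sum>w\<in>V. adj E s w * adjpow V E p w t)"
proof (induction p arbitrary: t)
  case 0
  show ?case
    using adjpow_1 finite_V adj_outside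
    by (simp add: if_distrib[of "\<lambda>x. _ * x"] sum.delta' cong: if_cong)
next
  case (Suc p)
  have "adjpow V E (Suc (Suc p)) s t = (\<Sum>w\<in>V. \<Sum>u\<in>V. adj E s u * adjpow V E p u w * adj E w t)"
    by (simp only: adjpow.simps(2)[of V E "Suc p" s t] Suc.IH sum_distrib_right)
  also have "\<dots> = (\<Sum>u\<in>V. adj E s u * adjpow V E (Suc p) u t)"
    by (subst sum.swap) (simp add: sum_distrib_left mult.assoc)
  finally show ?case .
qed

lemma adjpow_sym: "adjpow V E p s t = adjpow V E p t s"
proof (induction p arbitrary: s t)
  case (Suc p)
  have "adjpow V E (Suc p) s t = (\<Sum>w\<in>V. adj E t w * adjpow V E p w s)"
    by (simp add: Suc.IH[of s] adj_sym mult.commute)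
  also have "\<dots> = adjpow V E (Suc p) t s"
    by (simp only: adjpow_Suc_left)
  finally show ?case .
qed simp

lemma adjpow_3: "adjpow V E 3 s t = (\<Sum>x\<in>V. \<Sum>y\<in>V. adj E s x * adj E x y * adj E y t)"
proof -
  have adjpow_2: "adjpow V E 2 s y = (\<Sum>x\<in>V. adj E s x * adj E x y)" for y
    unfolding numeral_2_eq_2 adjpow.simps(2)[of V E "Suc 0"] adjpow_1[unfolded One_nat_def] ..
  have "adjpow V E 3 s t = (\<Sum>y\<in>V. \<Sum>x\<in>V. adj E s x * adj E x y * adj E y t)"
    unfolding numeral_3_eq_3 adjpow.simps(2)[of V E "Suc (Suc 0)"] adjpow_2[unfolded numeral_2_eq_2]
    by (simp add: sum_distrib_right)
  also have "\<dots> = (\<Sum>x\<in>V. \<Sum>y\<in>V. adj E s x * adj E x y * adj E y t)"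
    by (rule sum.swap)
  finally show ?thesis .
qed

lemma walk3_split:
  "adj E s x * adj E x y * adj E y t
     = of_bool ((s, x, y, t) \<in> P4_sequences E)
       + of_bool (y = s) * (adj E s x * adj E s t) + of_bool (x = t) * (adj E s t * adj E t y)
       - of_bool (x = t) * (of_bool (y = s) * adj E s t)"
  if "s \<noteq> t"
  using that irrefl by (auto simp: adj_def P4_sequences_def sym_iff)

lemma adjpow_3_split:
  assumes "s \<in> V" "t \<in> V" "s \<noteq> t"
  shows "adjpow V E 3 s t
    = (\<Sum>x\<in>V. \<Sum>y\<in>V. of_bool ((s, x, y, t) \<in> P4_sequences E)) + adj E s t * (deg s + deg t - 1)"
proof -
  have "adjpow V E 3 s t
    = (\<Sum>x\<in>V. \<Sum>y\<in>V. of_bool ((s, x, y, t) \<in> P4_sequences E))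
      + (\<Sum>x\<in>V. \<Sum>y\<in>V. of_bool (y = s) * (adj E s x * adj E s t))
      + (\<Sum>x\<in>V. \<Sum>y\<in>V. of_bool (x = t) * (adj E s t * adj E t y))
      - (\<Sum>x\<in>V. \<Sum>y\<in>V. of_bool (x = t) * (of_bool (y = s) * adj E s t))"
    unfolding adjpow_3 walk3_split[OF \<open>s \<noteq> t\<close>] by (simp only: sum.distrib sum_subtractf)
  also have "(\<Sum>x\<in>V. \<Sum>y\<in>V. of_bool (y = s) * (adj E s x * adj E s t)) = adj E s t * deg s"
    using assms finite_V by (simp add: deg_eq_sum_adj sum_distrib_left mult.commute)
  also have "(\<Sum>x\<in>V. \<Sum>y\<in>V. of_bool (x = t) * (adj E s t * adj E t y)) = adj E s t * deg t"
    unfolding sum_distrib_left[symmetric] using assms finite_V by (simp add: deg_eq_sum_adj)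
  also have "(\<Sum>x\<in>V. \<Sum>y\<in>V. of_bool (x = t) * (of_bool (y = s) * adj E s t)) = adj E s t"
    unfolding sum_distrib_left[symmetric] using assms finite_V by simp
  finally show ?thesis
    by (simp add: algebra_simps)
qed

lemma card_P4_sequences_eq_sum:
  "real (card (P4_sequences E))
     = (\<Sum>s\<in>V. \<Sum>t\<in>V - {s}. \<Sum>x\<in>V. \<Sum>y\<in>V. of_bool ((s, x, y, t) \<in> P4_sequences E))"
proof -
  let ?p = "\<lambda>s x y t. of_bool ((s, x, y, t) \<in> P4_sequences E) :: real"
  have "real (card (P4_sequences E)) = (\<Sum>q\<in>V \<times> V \<times> V \<times> V. of_bool (q \<in> P4_sequences E))"
    using P4_sequences_subset finite_V by (simp add: Int_absorb1 Int_def[symmetric])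
  also have "\<dots> = (\<Sum>s\<in>V. \<Sum>x\<in>V. \<Sum>y\<in>V. \<Sum>t\<in>V. ?p s x y t)"
    by (simp add: sum.cartesian_product')
  also have "\<dots> = (\<Sum>s\<in>V. \<Sum>x\<in>V. \<Sum>t\<in>V. \<Sum>y\<in>V. ?p s x y t)"
    by (intro sum.cong refl sum.swap)
  also have "\<dots> = (\<Sum>s\<in>V. \<Sum>t\<in>V. \<Sum>x\<in>V. \<Sum>y\<in>V. ?p s x y t)"
    by (intro sum.cong refl sum.swap)
  also have "\<dots> = (\<Sum>s\<in>V. \<Sum>t\<in>V - {s}. \<Sum>x\<in>V. \<Sum>y\<in>V. ?p s x y t)"
    using finite_V by (intro sum.cong[OF refl]) (simp add: sum_diff1 P4_sequences_def)
  finally show ?thesis .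
qed

lemma sum_offdiag_walks_eq_card:
  "(\<Sum>s\<in>V. \<Sum>t\<in>V - {s}. adjpow V E 3 s t - adj E s t * (2 * deg t - 1))
     = real (card (P4_sequences E))"
proof -
  have "(\<Sum>s\<in>V. \<Sum>t\<in>V - {s}. adjpow V E 3 s t - adj E s t * (2 * deg t - 1))
      = (\<Sum>s\<in>V. \<Sum>t\<in>V - {s}. (\<Sum>x\<in>V. \<Sum>y\<in>V. of_bool ((s, x, y, t) \<in> P4_sequences E))
           + (adj E s t * deg s - adj E s t * deg t))"
    by (intro sum.cong refl) (auto simp: adjpow_3_split algebra_simps)
  also have "\<dots> = real (card (P4_sequences E))
      + ((\<Sum>s\<in>V. \<Sum>t\<in>V - {s}. adj E s t * deg s) - (\<Sum>s\<in>V. \<Sum>t\<in>V - {s}. adj E s t * deg t))"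
    by (simp add: sum.distrib sum_subtractf card_P4_sequences_eq_sum)
  also have "(\<Sum>s\<in>V. \<Sum>t\<in>V - {s}. adj E s t * deg s) = (\<Sum>s\<in>V. \<Sum>t\<in>V - {s}. adj E s t * deg t)"
    unfolding sum_adj_left sum_adj_right ..
  finally show ?thesis by simp
qed

lemma card_mult_mean_sq_degree: "real (card V) * mean_sq_degree V E = (\<Sum>s\<in>V. deg s ^ 2)"
  using finite_V by (cases "V = {}") (simp_all add: mean_sq_degree_def)

lemma sum_offdiag_walks_split:
  "(\<Sum>s\<in>V. \<Sum>t\<in>V - {s}. adjpow V E 3 s t - adj E s t * (2 * deg t - 1))
     = (\<Sum>s\<in>V. \<Sum>t\<in>V - {s}. adjpow V E 3 s t) + (\<Sum>s\<in>V. \<Sum>t\<in>V - {s}. adjpow V E 1 s t)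
       - 2 * (real (card V) * mean_sq_degree V E)"
proof -
  have "(\<Sum>s\<in>V. \<Sum>t\<in>V - {s}. adj E s t * (2 * deg t - 1)) = 2 * (\<Sum>t\<in>V. deg t ^ 2) - (\<Sum>t\<in>V. deg t)"
    unfolding sum_adj_right
    by (simp add: algebra_simps power2_eq_square sum_subtractf sum_distrib_left)
  moreover have "(\<Sum>s\<in>V. \<Sum>t\<in>V - {s}. adjpow V E 1 s t) = (\<Sum>s\<in>V. deg s)"
    unfolding adjpow_1 using sum_adj_left[of "\<lambda>_. 1"] by simp
  moreover have "(\<Sum>s\<in>V. \<Sum>t\<in>V - {s}. adjpow V E 3 s t - adj E s t * (2 * deg t - 1))
      = (\<Sum>s\<in>V. \<Sum>t\<in>V - {s}. adjpow V E 3 s t) - (\<Sum>s\<in>V. \<Sum>t\<in>V - {s}. adj E s t * (2 * deg t - 1))"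
    by (simp only: sum_subtractf)
  ultimately show ?thesis
    using card_mult_mean_sq_degree by linarith
qed

end

lemma double_mp_eq_sum_offdiag:
  assumes "sgraph V E"
  shows "2 * mp V E p = (\<Sum>s\<in>V. \<Sum>t\<in>V - {s}. adjpow V E p s t)"
  unfolding mp_def
  by (rule sum_less_pairs_symmetric[OF sgraph.finite_V sgraph.adjpow_sym]) (use assms in blast)+

theorem proposition1:
  fixes V :: "'a::linorder set" and E :: "'a \<Rightarrow> 'a \<Rightarrow> bool"
  assumes "simple_graph V E"
  shows "real (count_P4 V E) = (\<Sum>q\<in>Qpairs E. cross E q)
       \<and> (\<Sum>q\<in>Qpairs E. cross E q)
           = (1/2) * (\<Sum>s\<in>V. \<Sum>t\<in>V - {s}.
                 adjpow V E 3 s t - adj E s t * (2 * real (degree V E t) - 1))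
       \<and> (1/2) * (\<Sum>s\<in>V. \<Sum>t\<in>V - {s}.
                 adjpow V E 3 s t - adj E s t * (2 * real (degree V E t) - 1))
           = mp V E 3 + mp V E 1 - real (card V) * mean_sq_degree V E"
proof -
  interpret sgraph V E
    by (rule sgraph.intro) (rule assms)
  have "real (count_P4 V E) = (\<Sum>q\<in>Qpairs E. cross E q)"
    using card_P4_sequences_count_P4 sum_Qpairs_cross by simp
  moreover have "(\<Sum>q\<in>Qpairs E. cross E q)
      = (1/2) * (\<Sum>s\<in>V. \<Sum>t\<in>V - {s}. adjpow V E 3 s t - adj E s t * (2 * deg t - 1))"
    using sum_Qpairs_cross sum_offdiag_walks_eq_card by simp
  moreover have "(1/2) * (\<Sum>s\<in>V. \<Sum>t\<in>V - {s}. adjpow V E 3 s t - adj E s t * (2 * deg t - 1))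
      = mp V E 3 + mp V E 1 - real (card V) * mean_sq_degree V E"
    using sum_offdiag_walks_split double_mp_eq_sum_offdiag[OF sgraph_axioms, of 3]
      double_mp_eq_sum_offdiag[OF sgraph_axioms, of 1]
    by simp
  ultimately show ?thesis
    by blast
qed

end
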